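(* The eventually different forcing $\mathbb E$ is a union of countably many subsets each of which is centered and closed-uf-lim-linked; i.e., $\mathbb E$ is $\sigma$-$(\Lambda(\mathrm{centered})\cap\Lambda^{\lim}_{\mathrm{cuf}})$-linked.
   Context: $\mathbb E$ consists of triples $(s,k,\varphi)$ with $s\in\omega^{<\omega}$, $k<\omega$ and $\varphi:\omega\to[\omega]^{\leq k}$, ordered by $(s',k',\varphi')\leq(s,k,\varphi)$ iff $s'\supseteq s$, $k'\geq k$, $\varphi'(i)\supseteq\varphi(i)$ for all $i$, and $s'(i)\notin\varphi(i)$ for all $i\in\mathrm{dom}(s')\setminus\mathrm{dom}(s)$. For a poset $\mathbb P$ and $Q\subseteq\mathbb P$, $Q$ is closed-uf-lim-linked if for every non-principal ultrafilter $D$ on $\omega$ there are $\lim^D:Q^\omega\to Q$ and a $\mathbb P$-name $\dot D'$ of an ultrafilter extending $D$ such that for all $\bar q=\langle q_m\rangle\in Q^\omega$, $\lim^D\bar q\Vdash\{m:q_m\in\dot G\}\in\dot D'$. *)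

theory Defs
  imports Main "HOL-Library.Sublist"
begin

type_synonym Econd = "nat list \<times> nat \<times> (nat \<Rightarrow> nat set)"

definition E_carrier :: "Econd set" where
  "E_carrier = {(s, k, \<phi>). \<forall>i. finite (\<phi> i) \<and> card (\<phi> i) \<le> k}"

definition E_le :: "Econd \<Rightarrow> Econd \<Rightarrow> bool" where
  "E_le c' c = (case c' of (s', k', \<phi>') \<Rightarrow> case c of (s, k, \<phi>) \<Rightarrow>
     prefix s s' \<and> k \<le> k' \<and> (\<forall>i. \<phi> i \<subseteq> \<phi>' i) \<and>
     (\<forall>i. length s \<le> i \<and> i < length s' \<longrightarrow> s' ! i \<notin> \<phi> i))"

definition nonprincipal_ultrafilter :: "nat set set \<Rightarrow> bool" where
  "nonprincipal_ultrafilter D \<longleftrightarrow>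
     UNIV \<in> D \<and> {} \<notin> D \<and>
     (\<forall>A B. A \<in> D \<and> A \<subseteq> B \<longrightarrow> B \<in> D) \<and>
     (\<forall>A B. A \<in> D \<and> B \<in> D \<longrightarrow> A \<inter> B \<in> D) \<and>
     (\<forall>A. A \<in> D \<or> - A \<in> D) \<and>
     (\<forall>A. finite A \<longrightarrow> A \<notin> D)"

text \<open>Truth values are regular open sets of conditions: downward closed sets A
  such that any p all of whose extensions have extensions in A lies in A.
  p forces phi iff p belongs to the truth value of phi.\<close>

definition ro_set :: "'a set \<Rightarrow> ('a \<Rightarrow> 'a \<Rightarrow> bool) \<Rightarrow> 'a set \<Rightarrow> bool" where
  "ro_set P le A \<longleftrightarrow> A \<subseteq> P \<and>
     (\<forall>p\<in>A. \<forall>r\<in>P. le r p \<longrightarrow> r \<in> A) \<and>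
     (\<forall>p\<in>P. (\<forall>r\<in>P. le r p \<longrightarrow> (\<exists>s\<in>P. le s r \<and> s \<in> A)) \<longrightarrow> p \<in> A)"

definition ro_neg :: "'a set \<Rightarrow> ('a \<Rightarrow> 'a \<Rightarrow> bool) \<Rightarrow> 'a set \<Rightarrow> 'a set" where
  "ro_neg P le A = {p\<in>P. \<forall>r\<in>P. le r p \<longrightarrow> r \<notin> A}"

definition ro_join :: "'a set \<Rightarrow> ('a \<Rightarrow> 'a \<Rightarrow> bool) \<Rightarrow> 'a set \<Rightarrow> 'a set \<Rightarrow> 'a set" where
  "ro_join P le A B = {p\<in>P. \<forall>r\<in>P. le r p \<longrightarrow> (\<exists>s\<in>P. le s r \<and> (s \<in> A \<or> s \<in> B))}"

text \<open>Truth value of "q belongs to the generic filter".\<close>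
definition ro_of :: "'a set \<Rightarrow> ('a \<Rightarrow> 'a \<Rightarrow> bool) \<Rightarrow> 'a \<Rightarrow> 'a set" where
  "ro_of P le q = {p\<in>P. \<forall>r\<in>P. le r p \<longrightarrow> (\<exists>s\<in>P. le s r \<and> le s q)}"

text \<open>A name of a subset of omega is given by its membership truth values
  X :: nat => 'a set (each regular open).\<close>
definition subset_name :: "'a set \<Rightarrow> ('a \<Rightarrow> 'a \<Rightarrow> bool) \<Rightarrow> (nat \<Rightarrow> 'a set) \<Rightarrow> bool" where
  "subset_name P le X \<longleftrightarrow> (\<forall>m. ro_set P le (X m))"

text \<open>Truth value of "X is a subset of Y".\<close>
definition bv_subset :: "'a set \<Rightarrow> ('a \<Rightarrow> 'a \<Rightarrow> bool) \<Rightarrow> (nat \<Rightarrow> 'a set) \<Rightarrow> (nat \<Rightarrow> 'a set) \<Rightarrow> 'a set" where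
  "bv_subset P le X Y = P \<inter> (\<Inter>m. ro_join P le (ro_neg P le (X m)) (Y m))"

definition check_set :: "'a set \<Rightarrow> nat set \<Rightarrow> nat \<Rightarrow> 'a set" where
  "check_set P A = (\<lambda>m. if m \<in> A then P else {})"

text \<open>U is a P-name of an ultrafilter on omega extending D: U X is the truth
  value of "X belongs to the ultrafilter", and 1 forces the ultrafilter axioms
  and that every element of D belongs to it.\<close>
definition uf_name :: "'a set \<Rightarrow> ('a \<Rightarrow> 'a \<Rightarrow> bool) \<Rightarrow> nat set set \<Rightarrow> ((nat \<Rightarrow> 'a set) \<Rightarrow> 'a set) \<Rightarrow> bool" where
  "uf_name P le D U \<longleftrightarrow>
     (\<forall>X. subset_name P le X \<longrightarrow> ro_set P le (U X)) \<and>
     (\<forall>X Y. subset_name P le X \<and> subset_name P le Y \<longrightarrow> U X \<inter> bv_subset P le X Y \<subseteq> U Y) \<and>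
     (\<forall>X Y. subset_name P le X \<and> subset_name P le Y \<longrightarrow> U X \<inter> U Y \<subseteq> U (\<lambda>m. X m \<inter> Y m)) \<and>
     U (\<lambda>m. {}) = {} \<and>
     (\<forall>X. subset_name P le X \<longrightarrow> ro_join P le (U X) (U (\<lambda>m. ro_neg P le (X m))) = P) \<and>
     (\<forall>A\<in>D. U (check_set P A) = P)"

definition centered :: "'a set \<Rightarrow> ('a \<Rightarrow> 'a \<Rightarrow> bool) \<Rightarrow> 'a set \<Rightarrow> bool" where
  "centered P le Q \<longleftrightarrow> Q \<subseteq> P \<and> (\<forall>F. finite F \<and> F \<subseteq> Q \<longrightarrow> (\<exists>r\<in>P. \<forall>q\<in>F. le r q))"

definition closed_uf_lim_linked :: "'a set \<Rightarrow> ('a \<Rightarrow> 'a \<Rightarrow> bool) \<Rightarrow> 'a set \<Rightarrow> bool" where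
  "closed_uf_lim_linked P le Q \<longleftrightarrow> Q \<subseteq> P \<and>
     (\<forall>D. nonprincipal_ultrafilter D \<longrightarrow>
        (\<exists>lim :: (nat \<Rightarrow> 'a) \<Rightarrow> 'a. \<exists>U. uf_name P le D U \<and>
           (\<forall>q. (\<forall>m. q m \<in> Q) \<longrightarrow>
                lim q \<in> Q \<and> lim q \<in> U (\<lambda>m. ro_of P le (q m)))))"

end

theory Submission
  imports Defs "HOL-Library.Countable"
begin

(* Fix a stem s and a width k.  The conditions (s, k, phi) form a centered set: finitely many of
   them have the common extension whose side conditions are the unions of theirs.  For an
   ultrafilter D, the limit of a sequence of such conditions forbids x at position i iff D-almost
   all of its members do.  A condition t below finitely many of these limits has a stem extending
   s whose entries beyond s are allowed by D-almost all members of each sequence, so for D-many m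
   there is a common extension of t and the m-th members.  This compatibility is all that is
   needed: the pairs (t, Y) such that t forces Y to contain all m in some A in D at which
   finitely many sequences with limits above t meet the generic filter generate a Boolean-valued
   filter on the names of subsets of omega, and a maximal such filter (Zorn) is a name of an
   ultrafilter extending D that contains {m. q m in G} whenever lim q is in G.  Countably many
   pairs (s, k) exhaust E. *)

type_synonym 'a forcing_relation = "('a \<times> (nat \<Rightarrow> 'a set)) set"

lemma nonprincipal_ultrafilter_UNIV: "nonprincipal_ultrafilter D \<Longrightarrow> UNIV \<in> D"
  unfolding nonprincipal_ultrafilter_def by blast

lemma nonprincipal_ultrafilter_nonempty: "nonprincipal_ultrafilter D \<Longrightarrow> A \<in> D \<Longrightarrow> A \<noteq> {}"
  unfolding nonprincipal_ultrafilter_def by blast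

lemma nonprincipal_ultrafilter_Compl: "nonprincipal_ultrafilter D \<Longrightarrow> A \<notin> D \<Longrightarrow> - A \<in> D"
  unfolding nonprincipal_ultrafilter_def by blast

lemma nonprincipal_ultrafilter_Int:
  "nonprincipal_ultrafilter D \<Longrightarrow> A \<in> D \<Longrightarrow> B \<in> D \<Longrightarrow> A \<inter> B \<in> D"
  unfolding nonprincipal_ultrafilter_def by blast

lemma nonprincipal_ultrafilter_INT:
  assumes D: "nonprincipal_ultrafilter D" and "finite I" and "\<forall>i\<in>I. S i \<in> D"
  shows "(\<Inter>i\<in>I. S i) \<in> D"
  using assms(2,3)
  by (induction I rule: finite_induct)
    (auto simp: nonprincipal_ultrafilter_UNIV[OF D] nonprincipal_ultrafilter_Int[OF D])

section \<open>Regular open truth values over a preorder\<close>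

locale forcing_notion =
  fixes P :: "'a set" and le :: "'a \<Rightarrow> 'a \<Rightarrow> bool"
  assumes le_refl: "p \<in> P \<Longrightarrow> le p p"
    and le_trans: "\<lbrakk>a \<in> P; b \<in> P; c \<in> P; le a b; le b c\<rbrakk> \<Longrightarrow> le a c"
begin

lemma ro_set_Int: "ro_set P le A \<Longrightarrow> ro_set P le B \<Longrightarrow> ro_set P le (A \<inter> B)"
  unfolding ro_set_def by (metis (no_types, lifting) IntD1 IntD2 IntI le_infI1)

lemma ro_set_ro_neg:
  assumes A: "ro_set P le A" shows "ro_set P le (ro_neg P le A)"
  unfolding ro_set_def
proof (intro conjI ballI impI)
  show "ro_neg P le A \<subseteq> P" unfolding ro_neg_def by blast
next
  fix p r assume "p \<in> ro_neg P le A" "r \<in> P" "le r p"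
  then show "r \<in> ro_neg P le A"
    unfolding ro_neg_def by (blast intro: le_trans)
next
  fix p assume p: "p \<in> P" and dense: "\<forall>r\<in>P. le r p \<longrightarrow> (\<exists>s\<in>P. le s r \<and> s \<in> ro_neg P le A)"
  have "r \<notin> A" if r: "r \<in> P" "le r p" for r
  proof
    assume "r \<in> A"
    obtain s where "s \<in> P" "le s r" "s \<in> ro_neg P le A" using dense r by blast
    moreover from this have "s \<in> A" using A \<open>r \<in> A\<close> unfolding ro_set_def by blast
    ultimately show False using le_refl unfolding ro_neg_def by blast
  qed
  then show "p \<in> ro_neg P le A" using p unfolding ro_neg_def by blast
qed

lemma ro_set_ro_of: "ro_set P le (ro_of P le q)"
  unfolding ro_set_def
proof (intro conjI ballI impI)
  show "ro_of P le q \<subseteq> P" unfolding ro_of_def by blast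
next
  fix p r assume "p \<in> ro_of P le q" "r \<in> P" "le r p"
  then show "r \<in> ro_of P le q"
    unfolding ro_of_def by (blast intro: le_trans)
next
  fix p assume "p \<in> P" and dense: "\<forall>r\<in>P. le r p \<longrightarrow> (\<exists>s\<in>P. le s r \<and> s \<in> ro_of P le q)"
  have "\<exists>s\<in>P. le s r \<and> le s q" if r: "r \<in> P" "le r p" for r
  proof -
    obtain s where s: "s \<in> P" "le s r" "s \<in> ro_of P le q" using dense r by blast
    then obtain s' where "s' \<in> P" "le s' s" "le s' q" using le_refl unfolding ro_of_def by blast
    then show ?thesis using s r le_trans by blast
  qed
  then show "p \<in> ro_of P le q" using \<open>p \<in> P\<close> unfolding ro_of_def by blast
qed

lemma subset_name_Int:
  "subset_name P le X \<Longrightarrow> subset_name P le Y \<Longrightarrow> subset_name P le (\<lambda>m. X m \<inter> Y m)"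
  unfolding subset_name_def using ro_set_Int by blast

lemma subset_name_ro_neg: "subset_name P le X \<Longrightarrow> subset_name P le (\<lambda>m. ro_neg P le (X m))"
  unfolding subset_name_def using ro_set_ro_neg by blast

lemma subset_name_ro_of: "subset_name P le (\<lambda>m. ro_of P le (q m))"
  unfolding subset_name_def using ro_set_ro_of by blast

lemma subset_name_check_set: "subset_name P le (check_set P A)"
  unfolding subset_name_def check_set_def ro_set_def using le_refl by auto

lemma subset_name_const_P: "subset_name P le (\<lambda>m. P)"
  using subset_name_check_set[of UNIV] by (simp add: check_set_def)

definition subset_below :: "'a \<Rightarrow> (nat \<Rightarrow> 'a set) \<Rightarrow> (nat \<Rightarrow> 'a set) \<Rightarrow> bool" where
  "subset_below p X Y \<longleftrightarrow> (\<forall>m. \<forall>r\<in>P. le r p \<and> r \<in> X m \<longrightarrow> r \<in> Y m)"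

lemma subset_below_le:
  "subset_below p X Y \<Longrightarrow> p \<in> P \<Longrightarrow> q \<in> P \<Longrightarrow> le q p \<Longrightarrow> subset_below q X Y"
  unfolding subset_below_def by (blast intro: le_trans)

lemma subset_below_trans: "subset_below p X Y \<Longrightarrow> subset_below p Y Z \<Longrightarrow> subset_below p X Z"
  unfolding subset_below_def by blast

lemma subset_below_if_bv_subset:
  assumes X: "subset_name P le X" and Y: "subset_name P le Y" and p: "p \<in> bv_subset P le X Y"
  shows "subset_below p X Y"
  unfolding subset_below_def
proof (intro allI ballI impI)
  fix m r assume r: "r \<in> P" "le r p \<and> r \<in> X m"
  have Xm: "ro_set P le (X m)" and Ym: "ro_set P le (Y m)"
    using X Y unfolding subset_name_def by auto
  have "p \<in> P" and join: "p \<in> ro_join P le (ro_neg P le (X m)) (Y m)"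
    using p unfolding bv_subset_def by auto
  have "\<exists>s\<in>P. le s r' \<and> s \<in> Y m" if r': "r' \<in> P" "le r' r" for r'
  proof -
    have "le r' p" using le_trans r r' \<open>p \<in> P\<close> by blast
    then obtain s where s: "s \<in> P" "le s r'" "s \<in> ro_neg P le (X m) \<or> s \<in> Y m"
      using join r' unfolding ro_join_def by blast
    have "s \<in> X m" using Xm r r' s le_trans unfolding ro_set_def by meson
    then have "s \<notin> ro_neg P le (X m)" using s le_refl unfolding ro_neg_def by blast
    then show ?thesis using s by blast
  qed
  then show "r \<in> Y m" using Ym r unfolding ro_set_def by blast
qed

section \<open>Boolean-valued filters on the names of subsets of omega\<close>

definition dense_closure :: "'a forcing_relation \<Rightarrow> 'a forcing_relation" where
  "dense_closure S = {(p, X). p \<in> P \<and> subset_name P le X \<and>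
     (\<forall>r\<in>P. le r p \<longrightarrow> (\<exists>s\<in>P. le s r \<and> (s, X) \<in> S))}"

lemma dense_closureI:
  "p \<in> P \<Longrightarrow> subset_name P le X \<Longrightarrow> (\<And>r. r \<in> P \<Longrightarrow> le r p \<Longrightarrow> \<exists>s\<in>P. le s r \<and> (s, X) \<in> S)
    \<Longrightarrow> (p, X) \<in> dense_closure S"
  unfolding dense_closure_def by blast

lemma dense_closure_downI:
  "p \<in> P \<Longrightarrow> subset_name P le X \<Longrightarrow> (\<And>r. r \<in> P \<Longrightarrow> le r p \<Longrightarrow> (r, X) \<in> S)
    \<Longrightarrow> (p, X) \<in> dense_closure S"
  by (rule dense_closureI) (auto intro: le_refl)

lemma dense_closureD:
  "(p, X) \<in> dense_closure S \<Longrightarrow> r \<in> P \<Longrightarrow> le r p \<Longrightarrow> \<exists>s\<in>P. le s r \<and> (s, X) \<in> S"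
  unfolding dense_closure_def by blast

lemma dense_closure_mem: "(p, X) \<in> dense_closure S \<Longrightarrow> p \<in> P \<and> subset_name P le X"
  unfolding dense_closure_def by blast

lemma dense_closure_mono: "S \<subseteq> T \<Longrightarrow> dense_closure S \<subseteq> dense_closure T"
  unfolding dense_closure_def by blast

lemma dense_closure_le:
  assumes pX: "(p, X) \<in> dense_closure S" and r: "r \<in> P" "le r p"
  shows "(r, X) \<in> dense_closure S"
proof (rule dense_closureI)
  have "p \<in> P" and "subset_name P le X" using dense_closure_mem[OF pX] by auto
  then show "r \<in> P" "subset_name P le X" using r by auto
  show "\<exists>s\<in>P. le s r' \<and> (s, X) \<in> S" if "r' \<in> P" "le r' r" for r'
    using dense_closureD[OF pX] le_trans[OF that(1) r(1) \<open>p \<in> P\<close> that(2) r(2)] that by blast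
qed

lemma dense_closure_idem: "dense_closure (dense_closure S) = dense_closure S"
proof (intro set_eqI iffI)
  fix x assume x: "x \<in> dense_closure (dense_closure S)"
  obtain p X where x_eq: "x = (p, X)" by (cases x)
  have pX: "(p, X) \<in> dense_closure (dense_closure S)" using x x_eq by simp
  have "\<exists>s\<in>P. le s r \<and> (s, X) \<in> S" if r: "r \<in> P" "le r p" for r
  proof -
    obtain s where s: "s \<in> P" "le s r" "(s, X) \<in> dense_closure S"
      using dense_closureD[OF pX r] by blast
    then obtain s' where s': "s' \<in> P" "le s' s" "(s', X) \<in> S"
      using dense_closureD[OF s(3) s(1) le_refl[OF s(1)]] by blast
    have "le s' r" using le_trans[OF s'(1) s(1) r(1) s'(2) s(2)] .
    then show ?thesis using s' by blast
  qed
  then show "x \<in> dense_closure S"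
    using dense_closure_mem[OF pX] x_eq by (simp add: dense_closure_def)
next
  fix x assume x: "x \<in> dense_closure S"
  obtain p X where x_eq: "x = (p, X)" by (cases x)
  have pX: "(p, X) \<in> dense_closure S" using x x_eq by simp
  have "(p, X) \<in> dense_closure (dense_closure S)"
    using dense_closure_mem[OF pX] dense_closure_le[OF pX] by (blast intro: dense_closure_downI)
  then show "x \<in> dense_closure (dense_closure S)" using x_eq by simp
qed

text \<open>A Boolean-valued filter is given by its forcing relation: (p, X) \<in> R means that p forces
  the name X into the filter.  Ordered by inclusion, these relations are amenable to Zorn's lemma.\<close>

definition bv_filter :: "'a forcing_relation \<Rightarrow> bool" where
  "bv_filter R \<longleftrightarrow> dense_closure R = R \<and>
     (\<forall>p\<in>P. (p, \<lambda>m. P) \<in> R) \<and>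
     (\<forall>p X Y. (p, X) \<in> R \<and> subset_name P le Y \<and> subset_below p X Y \<longrightarrow> (p, Y) \<in> R) \<and>
     (\<forall>p X Y. (p, X) \<in> R \<and> (p, Y) \<in> R \<longrightarrow> (p, \<lambda>m. X m \<inter> Y m) \<in> R) \<and>
     (\<forall>p. (p, \<lambda>m. {}) \<notin> R)"

lemma dense_closure_subset_below:
  assumes up: "\<And>p X Y. (p, X) \<in> S \<Longrightarrow> p \<in> P \<Longrightarrow> subset_name P le Y \<Longrightarrow> subset_below p X Y
      \<Longrightarrow> (p, Y) \<in> S"
    and pX: "(p, X) \<in> dense_closure S" and Y: "subset_name P le Y" and XY: "subset_below p X Y"
  shows "(p, Y) \<in> dense_closure S"
proof (rule dense_closureI)
  show p: "p \<in> P" using pX dense_closure_mem by blast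
  show "subset_name P le Y" by (rule Y)
  fix r assume r: "r \<in> P" "le r p"
  obtain s where s: "s \<in> P" "le s r" "(s, X) \<in> S" using dense_closureD[OF pX r] by blast
  have "subset_below s X Y" using subset_below_le[OF XY p s(1) le_trans[OF s(1) r(1) p s(2) r(2)]] .
  then show "\<exists>s\<in>P. le s r \<and> (s, Y) \<in> S" using up[OF s(3) s(1) Y] s(1,2) by blast
qed

lemma dense_closure_Int:
  assumes down: "\<And>p r X. (p, X) \<in> S \<Longrightarrow> p \<in> P \<Longrightarrow> r \<in> P \<Longrightarrow> le r p \<Longrightarrow> (r, X) \<in> S"
    and Int: "\<And>p X Y. (p, X) \<in> S \<Longrightarrow> (p, Y) \<in> S \<Longrightarrow> p \<in> P \<Longrightarrow> (p, \<lambda>m. X m \<inter> Y m) \<in> S"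
    and pX: "(p, X) \<in> dense_closure S" and pY: "(p, Y) \<in> dense_closure S"
  shows "(p, \<lambda>m. X m \<inter> Y m) \<in> dense_closure S"
proof (rule dense_closureI)
  show p: "p \<in> P" using pX dense_closure_mem by blast
  show "subset_name P le (\<lambda>m. X m \<inter> Y m)"
    using pX pY dense_closure_mem subset_name_Int by blast
  fix r assume r: "r \<in> P" "le r p"
  obtain s where s: "s \<in> P" "le s r" "(s, X) \<in> S" using dense_closureD[OF pX r] by blast
  obtain s' where s': "s' \<in> P" "le s' s" "(s', Y) \<in> S"
    using dense_closureD[OF pY s(1) le_trans[OF s(1) r(1) p s(2) r(2)]] by blast
  have "(s', \<lambda>m. X m \<inter> Y m) \<in> S" using Int[OF down[OF s(3) s(1) s'(1,2)] s'(3,1)] .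
  moreover have "le s' r" using le_trans[OF s'(1) s(1) r(1) s'(2) s(2)] .
  ultimately show "\<exists>s\<in>P. le s r \<and> (s, \<lambda>m. X m \<inter> Y m) \<in> S" using s'(1) by blast
qed

lemma bv_filter_dense_closure:
  assumes full: "\<And>p. p \<in> P \<Longrightarrow> (p, \<lambda>m. P) \<in> S"
    and down: "\<And>p r X. (p, X) \<in> S \<Longrightarrow> p \<in> P \<Longrightarrow> r \<in> P \<Longrightarrow> le r p \<Longrightarrow> (r, X) \<in> S"
    and up: "\<And>p X Y. (p, X) \<in> S \<Longrightarrow> p \<in> P \<Longrightarrow> subset_name P le Y \<Longrightarrow> subset_below p X Y
      \<Longrightarrow> (p, Y) \<in> S"
    and Int: "\<And>p X Y. (p, X) \<in> S \<Longrightarrow> (p, Y) \<in> S \<Longrightarrow> p \<in> P \<Longrightarrow> (p, \<lambda>m. X m \<inter> Y m) \<in> S"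
    and empty: "\<And>p. p \<in> P \<Longrightarrow> (p, \<lambda>m. {}) \<notin> S"
  shows "bv_filter (dense_closure S)"
  unfolding bv_filter_def
proof (intro conjI allI ballI impI)
  show "dense_closure (dense_closure S) = dense_closure S" by (rule dense_closure_idem)
  show "(p, \<lambda>m. P) \<in> dense_closure S" if "p \<in> P" for p
    using dense_closure_downI[OF that subset_name_const_P] full by blast
  show "(p, Y) \<in> dense_closure S"
    if "(p, X) \<in> dense_closure S \<and> subset_name P le Y \<and> subset_below p X Y" for p X Y
  proof (rule dense_closure_subset_below[of S p X Y])
    show "(p', Y') \<in> S"
      if "(p', X') \<in> S" "p' \<in> P" "subset_name P le Y'" "subset_below p' X' Y'" for p' X' Y'
      using up that by blast
  qed (use that in auto)
  show "(p, \<lambda>m. X m \<inter> Y m) \<in> dense_closure S"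
    if "(p, X) \<in> dense_closure S \<and> (p, Y) \<in> dense_closure S" for p X Y
  proof (rule dense_closure_Int[of S p X Y])
    show "(r, X') \<in> S" if "(p', X') \<in> S" "p' \<in> P" "r \<in> P" "le r p'" for p' r X'
      using down that by blast
    show "(p', \<lambda>m. X' m \<inter> Y' m) \<in> S" if "(p', X') \<in> S" "(p', Y') \<in> S" "p' \<in> P" for p' X' Y'
      using Int that by blast
  qed (use that in auto)
  show "(p, \<lambda>m. {}) \<notin> dense_closure S" for p
  proof
    assume p: "(p, \<lambda>m. {}) \<in> dense_closure S"
    then have "p \<in> P" using dense_closure_mem by blast
    then show False using dense_closureD[OF p \<open>p \<in> P\<close> le_refl] empty by blast
  qed
qed

lemma
  assumes "bv_filter R"
  shows bv_filter_dense_closure_eq: "dense_closure R = R"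
    and bv_filter_const_P: "p \<in> P \<Longrightarrow> (p, \<lambda>m. P) \<in> R"
    and bv_filter_subset_below:
      "(p, X) \<in> R \<Longrightarrow> subset_name P le Y \<Longrightarrow> subset_below p X Y \<Longrightarrow> (p, Y) \<in> R"
    and bv_filter_Int: "(p, X) \<in> R \<Longrightarrow> (p, Y) \<in> R \<Longrightarrow> (p, \<lambda>m. X m \<inter> Y m) \<in> R"
    and bv_filter_empty: "(p, \<lambda>m. {}) \<notin> R"
  using assms unfolding bv_filter_def by blast+

lemma bv_filter_mem: "bv_filter R \<Longrightarrow> (p, X) \<in> R \<Longrightarrow> p \<in> P \<and> subset_name P le X"
  using dense_closure_mem bv_filter_dense_closure_eq by blast

lemma bv_filter_le: "bv_filter R \<Longrightarrow> (p, X) \<in> R \<Longrightarrow> r \<in> P \<Longrightarrow> le r p \<Longrightarrow> (r, X) \<in> R"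
  using dense_closure_le bv_filter_dense_closure_eq by blast

lemma bv_filter_chain_Union:
  assumes "C \<noteq> {}" and chain: "\<forall>R\<in>C. \<forall>R'\<in>C. R \<subseteq> R' \<or> R' \<subseteq> R" and filters: "\<forall>R\<in>C. bv_filter R"
  shows "bv_filter (dense_closure (\<Union>C))"
proof (rule bv_filter_dense_closure)
  show "(p, \<lambda>m. P) \<in> \<Union>C" if "p \<in> P" for p
    using assms that bv_filter_const_P by blast
  show "(r, X) \<in> \<Union>C" if "(p, X) \<in> \<Union>C" "r \<in> P" "le r p" for p r X
    using filters that bv_filter_le by blast
  show "(p, Y) \<in> \<Union>C" if "(p, X) \<in> \<Union>C" "subset_name P le Y" "subset_below p X Y" for p X Y
    using filters that bv_filter_subset_below by blast
  show "(p, \<lambda>m. X m \<inter> Y m) \<in> \<Union>C" if "(p, X) \<in> \<Union>C" and "(p, Y) \<in> \<Union>C" for p X Y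
  proof -
    obtain R R' where R: "R \<in> C" "R' \<in> C" "(p, X) \<in> R" "(p, Y) \<in> R'"
      using \<open>(p, X) \<in> \<Union>C\<close> \<open>(p, Y) \<in> \<Union>C\<close> by blast
    show ?thesis
    proof (cases "R \<subseteq> R'")
      case True
      then show ?thesis using R filters bv_filter_Int[of R' p X Y] by blast
    next
      case False
      then have "R' \<subseteq> R" using R chain by blast
      then show ?thesis using R filters bv_filter_Int[of R p X Y] by blast
    qed
  qed
  show "(p, \<lambda>m. {}) \<notin> \<Union>C" for p
    using filters bv_filter_empty by blast
qed

lemma bv_filter_maximal_extension:
  assumes "bv_filter R\<^sub>0"
  shows "\<exists>R. bv_filter R \<and> R\<^sub>0 \<subseteq> R \<and> (\<forall>R'. bv_filter R' \<and> R \<subseteq> R' \<longrightarrow> R' = R)"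
proof -
  let ?F = "{R. bv_filter R \<and> R\<^sub>0 \<subseteq> R}"
  have "\<exists>U\<in>?F. \<forall>R\<in>C. R \<subseteq> U" if C: "subset.chain ?F C" for C
  proof (cases "C = {}")
    case True
    then show ?thesis using assms by blast
  next
    case False
    have members: "\<forall>R\<in>C. bv_filter R \<and> R\<^sub>0 \<subseteq> R"
      and total: "\<forall>R\<in>C. \<forall>R'\<in>C. R \<subseteq> R' \<or> R' \<subseteq> R"
      using C unfolding subset_chain_def by auto
    have "R \<subseteq> dense_closure (\<Union>C)" if "R \<in> C" for R
    proof -
      have "R = dense_closure R" using members that bv_filter_dense_closure_eq by metis
      also have "\<dots> \<subseteq> dense_closure (\<Union>C)" using that by (intro dense_closure_mono) blast
      finally show ?thesis .
    qed
    moreover have "bv_filter (dense_closure (\<Union>C))"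
      using bv_filter_chain_Union[OF False total] members by blast
    moreover obtain R where "R \<in> C" using False by blast
    ultimately show ?thesis using members by blast
  qed
  then obtain M where M: "M \<in> ?F" and maximal: "\<forall>R\<in>?F. M \<subseteq> R \<longrightarrow> R = M"
    using subset_Zorn[of ?F] by meson
  show ?thesis
  proof (intro exI conjI allI impI)
    show "bv_filter M" "R\<^sub>0 \<subseteq> M" using M by auto
    fix R assume "bv_filter R \<and> M \<subseteq> R"
    then show "R = M" using maximal \<open>R\<^sub>0 \<subseteq> M\<close> by auto
  qed
qed

definition extend_below :: "'a forcing_relation \<Rightarrow> 'a \<Rightarrow> (nat \<Rightarrow> 'a set) \<Rightarrow> 'a forcing_relation" where
  "extend_below R p X = {(s, Y). (s, Y) \<in> R \<or>
     (le s p \<and> (\<exists>Z. (s, Z) \<in> R \<and> subset_below s (\<lambda>m. Z m \<inter> X m) Y))}"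

lemma mem_extend_below_iff_le:
  "le s p \<Longrightarrow> (s, Y) \<in> extend_below R p X \<longleftrightarrow> (\<exists>Z. (s, Z) \<in> R \<and> subset_below s (\<lambda>m. Z m \<inter> X m) Y)"
  unfolding extend_below_def subset_below_def by blast

lemma mem_extend_below_iff_not_le: "\<not> le s p \<Longrightarrow> (s, Y) \<in> extend_below R p X \<longleftrightarrow> (s, Y) \<in> R"
  unfolding extend_below_def by blast

lemma subset_below_ro_neg_if_disjoint:
  assumes Z: "subset_name P le Z" and s: "s \<in> P"
    and disjoint: "subset_below s (\<lambda>m. Z m \<inter> X m) (\<lambda>m. {})"
  shows "subset_below s Z (\<lambda>m. ro_neg P le (X m))"
  unfolding subset_below_def ro_neg_def
proof (intro allI ballI impI CollectI conjI)
  fix m r r' assume r: "r \<in> P" "le r s \<and> r \<in> Z m" and r': "r' \<in> P" "le r' r"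
  have "ro_set P le (Z m)" using Z unfolding subset_name_def by blast
  then have "r' \<in> Z m" using r r' unfolding ro_set_def by blast
  moreover have "le r' s" using le_trans[OF r'(1) r(1) s r'(2)] r by blast
  ultimately show "r' \<notin> X m" using disjoint r'(1) unfolding subset_below_def by blast
qed auto

lemma bv_filter_extend_below:
  assumes R: "bv_filter R" and X: "subset_name P le X" and p: "p \<in> P"
    and no_neg: "\<And>s. s \<in> P \<Longrightarrow> le s p \<Longrightarrow> (s, \<lambda>m. ro_neg P le (X m)) \<notin> R"
  shows "bv_filter (dense_closure (extend_below R p X))"
proof (rule bv_filter_dense_closure)
  show "(s, \<lambda>m. P) \<in> extend_below R p X" if "s \<in> P" for s
    using bv_filter_const_P[OF R that] unfolding extend_below_def by blast
next
  fix s r Y assume sY: "(s, Y) \<in> extend_below R p X" and s: "s \<in> P" and r: "r \<in> P" "le r s"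
  show "(r, Y) \<in> extend_below R p X"
  proof (cases "le s p")
    case True
    then obtain Z where Z: "(s, Z) \<in> R" "subset_below s (\<lambda>m. Z m \<inter> X m) Y"
      using sY mem_extend_below_iff_le[OF True] by blast
    have "(r, Z) \<in> R" using bv_filter_le[OF R Z(1) r] .
    moreover have "subset_below r (\<lambda>m. Z m \<inter> X m) Y" using subset_below_le[OF Z(2) s r] .
    ultimately show ?thesis
      using mem_extend_below_iff_le[OF le_trans[OF r(1) s p r(2) True]] by blast
  next
    case False
    then have "(s, Y) \<in> R" using sY mem_extend_below_iff_not_le by blast
    then have "(r, Y) \<in> R" using bv_filter_le[OF R _ r] by blast
    then show ?thesis unfolding extend_below_def by blast
  qed
next
  fix s Y Y' assume sY: "(s, Y) \<in> extend_below R p X" and Y': "subset_name P le Y'"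
    and YY': "subset_below s Y Y'"
  show "(s, Y') \<in> extend_below R p X"
  proof (cases "le s p")
    case True
    then obtain Z where "(s, Z) \<in> R" "subset_below s (\<lambda>m. Z m \<inter> X m) Y"
      using sY mem_extend_below_iff_le[OF True] by blast
    then show ?thesis using mem_extend_below_iff_le[OF True] subset_below_trans[OF _ YY'] by blast
  next
    case False
    then have "(s, Y) \<in> R" using sY mem_extend_below_iff_not_le by blast
    then show ?thesis
      using bv_filter_subset_below[OF R _ Y' YY'] unfolding extend_below_def by blast
  qed
next
  fix s Y Y' assume sY: "(s, Y) \<in> extend_below R p X" and sY': "(s, Y') \<in> extend_below R p X"
  show "(s, \<lambda>m. Y m \<inter> Y' m) \<in> extend_below R p X"
  proof (cases "le s p")
    case True
    obtain Z where Z: "(s, Z) \<in> R" "subset_below s (\<lambda>m. Z m \<inter> X m) Y"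
      using sY mem_extend_below_iff_le[OF True] by blast
    obtain Z' where Z': "(s, Z') \<in> R" "subset_below s (\<lambda>m. Z' m \<inter> X m) Y'"
      using sY' mem_extend_below_iff_le[OF True] by blast
    have "(s, \<lambda>m. Z m \<inter> Z' m) \<in> R" using bv_filter_Int[OF R Z(1) Z'(1)] .
    moreover have "subset_below s (\<lambda>m. (Z m \<inter> Z' m) \<inter> X m) (\<lambda>m. Y m \<inter> Y' m)"
      using Z(2) Z'(2) unfolding subset_below_def by blast
    ultimately show ?thesis using mem_extend_below_iff_le[OF True] by blast
  next
    case False
    then have "(s, Y) \<in> R" "(s, Y') \<in> R" using sY sY' mem_extend_below_iff_not_le by blast+
    then show ?thesis using bv_filter_Int[OF R] unfolding extend_below_def by blast
  qed
next
  fix s assume s: "s \<in> P"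
  show "(s, \<lambda>m. {}) \<notin> extend_below R p X"
  proof
    assume empty: "(s, \<lambda>m. {}) \<in> extend_below R p X"
    show False
    proof (cases "le s p")
      case True
      then obtain Z where Z: "(s, Z) \<in> R" "subset_below s (\<lambda>m. Z m \<inter> X m) (\<lambda>m. {})"
        using empty mem_extend_below_iff_le[OF True] by blast
      have "subset_below s Z (\<lambda>m. ro_neg P le (X m))"
        using subset_below_ro_neg_if_disjoint[OF _ s Z(2)] bv_filter_mem[OF R Z(1)] by blast
      then have "(s, \<lambda>m. ro_neg P le (X m)) \<in> R"
        using bv_filter_subset_below[OF R Z(1) subset_name_ro_neg[OF X]] by blast
      then show False using no_neg[OF s True] by blast
    next
      case False
      then show False using empty mem_extend_below_iff_not_le bv_filter_empty[OF R] by blast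
    qed
  qed
qed

lemma bv_filter_extend:
  assumes R: "bv_filter R" and X: "subset_name P le X" and p: "p \<in> P"
    and no_neg: "\<And>s. s \<in> P \<Longrightarrow> le s p \<Longrightarrow> (s, \<lambda>m. ro_neg P le (X m)) \<notin> R"
  shows "\<exists>R'. bv_filter R' \<and> R \<subseteq> R' \<and> (p, X) \<in> R'"
proof (intro exI conjI)
  show "bv_filter (dense_closure (extend_below R p X))"
    using bv_filter_extend_below[OF R X p no_neg] .
  have "R \<subseteq> extend_below R p X" unfolding extend_below_def by blast
  then show "R \<subseteq> dense_closure (extend_below R p X)"
    using dense_closure_mono bv_filter_dense_closure_eq[OF R] by blast
  show "(p, X) \<in> dense_closure (extend_below R p X)"
  proof (rule dense_closure_downI[OF p X])
    fix r assume r: "r \<in> P" "le r p"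
    have "subset_below r (\<lambda>m. P \<inter> X m) X" unfolding subset_below_def by blast
    then show "(r, X) \<in> extend_below R p X"
      using mem_extend_below_iff_le[OF r(2)] bv_filter_const_P[OF R r(1)] by blast
  qed
qed

definition bv_ultra :: "'a forcing_relation \<Rightarrow> bool" where
  "bv_ultra R \<longleftrightarrow> (\<forall>X. subset_name P le X \<longrightarrow>
     (\<forall>p\<in>P. \<exists>s\<in>P. le s p \<and> ((s, X) \<in> R \<or> (s, \<lambda>m. ro_neg P le (X m)) \<in> R)))"

lemma bv_ultra_extension:
  assumes "bv_filter R\<^sub>0"
  shows "\<exists>R. bv_filter R \<and> R\<^sub>0 \<subseteq> R \<and> bv_ultra R"
proof -
  obtain R where R: "bv_filter R" "R\<^sub>0 \<subseteq> R"
    and maximal: "\<forall>R'. bv_filter R' \<and> R \<subseteq> R' \<longrightarrow> R' = R"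
    using bv_filter_maximal_extension[OF assms] by auto
  have "\<exists>s\<in>P. le s p \<and> ((s, X) \<in> R \<or> (s, \<lambda>m. ro_neg P le (X m)) \<in> R)"
    if X: "subset_name P le X" and p: "p \<in> P" for X p
  proof (cases "\<exists>s\<in>P. le s p \<and> (s, \<lambda>m. ro_neg P le (X m)) \<in> R")
    case True
    then show ?thesis by blast
  next
    case False
    then obtain R' where R': "bv_filter R'" "R \<subseteq> R'" "(p, X) \<in> R'"
      using bv_filter_extend[OF R(1) X p] by blast
    have "R' = R" using maximal R'(1,2) by simp
    then show ?thesis using R'(3) p le_refl[OF p] by auto
  qed
  then have "bv_ultra R" unfolding bv_ultra_def by blast
  then show ?thesis using R by blast
qed

lemma uf_name_bv_ultra:
  assumes R: "bv_filter R" and ultra: "bv_ultra R"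
    and check: "\<And>A p. A \<in> D \<Longrightarrow> p \<in> P \<Longrightarrow> (p, check_set P A) \<in> R"
  shows "uf_name P le D (\<lambda>X. {p. (p, X) \<in> R})"
  unfolding uf_name_def
proof (intro conjI allI impI ballI)
  fix X assume X: "subset_name P le X"
  show "ro_set P le {p. (p, X) \<in> R}"
    unfolding ro_set_def
  proof (intro conjI ballI impI)
    show "{p. (p, X) \<in> R} \<subseteq> P" using bv_filter_mem[OF R] by blast
    show "r \<in> {p. (p, X) \<in> R}" if "p \<in> {p. (p, X) \<in> R}" "r \<in> P" "le r p" for p r
      using bv_filter_le[OF R] that by blast
    show "p \<in> {p. (p, X) \<in> R}"
      if p: "p \<in> P" and dense: "\<forall>r\<in>P. le r p \<longrightarrow> (\<exists>s\<in>P. le s r \<and> s \<in> {p. (p, X) \<in> R})" for p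
    proof -
      have "(p, X) \<in> dense_closure R" using dense dense_closureI[OF p X] by simp
      then show ?thesis using bv_filter_dense_closure_eq[OF R] by simp
    qed
  qed
  have "\<exists>s\<in>P. le s r \<and> ((s, X) \<in> R \<or> (s, \<lambda>m. ro_neg P le (X m)) \<in> R)" if "r \<in> P" for r
    using ultra X that unfolding bv_ultra_def by blast
  then show "ro_join P le {p. (p, X) \<in> R} {p. (p, \<lambda>m. ro_neg P le (X m)) \<in> R} = P"
    unfolding ro_join_def by auto
next
  fix X Y assume XY: "subset_name P le X \<and> subset_name P le Y"
  show "{p. (p, X) \<in> R} \<inter> bv_subset P le X Y \<subseteq> {p. (p, Y) \<in> R}"
  proof
    fix p assume "p \<in> {p. (p, X) \<in> R} \<inter> bv_subset P le X Y"
    then show "p \<in> {p. (p, Y) \<in> R}"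
      using subset_below_if_bv_subset[of X Y p] bv_filter_subset_below[OF R, of p X Y] XY by blast
  qed
  show "{p. (p, X) \<in> R} \<inter> {p. (p, Y) \<in> R} \<subseteq> {p. (p, \<lambda>m. X m \<inter> Y m) \<in> R}"
    using bv_filter_Int[OF R] by blast
next
  show "{p. (p, \<lambda>m. {}) \<in> R} = {}" using bv_filter_empty[OF R] by blast
next
  fix A assume "A \<in> D"
  then show "{p. (p, check_set P A) \<in> R} = P" using check bv_filter_mem[OF R] by blast
qed

section \<open>Ultrafilter limits\<close>

lemma mem_ro_of_if_le:
  assumes r: "r \<in> P" and q: "q \<in> P" and rq: "le r q"
  shows "r \<in> ro_of P le q"
  unfolding ro_of_def using r le_trans[OF _ r q _ rq] le_refl by blast

definition ultrafilter_limit :: "nat set set \<Rightarrow> 'a set \<Rightarrow> ((nat \<Rightarrow> 'a) \<Rightarrow> 'a) \<Rightarrow> bool" where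
  "ultrafilter_limit D Q lim \<longleftrightarrow> (\<forall>q. range q \<subseteq> Q \<longrightarrow> lim q \<in> Q) \<and>
     (\<forall>F A t. finite F \<longrightarrow> (\<forall>q\<in>F. range q \<subseteq> Q \<and> le t (lim q)) \<longrightarrow> A \<in> D \<longrightarrow> t \<in> P \<longrightarrow>
        (\<exists>m\<in>A. \<exists>r\<in>P. le r t \<and> (\<forall>q\<in>F. le r (q m))))"

lemma ultrafilter_limit_in:
  "ultrafilter_limit D Q lim \<Longrightarrow> range q \<subseteq> Q \<Longrightarrow> lim q \<in> Q"
  unfolding ultrafilter_limit_def by blast

lemma ultrafilter_limitD:
  "ultrafilter_limit D Q lim \<Longrightarrow> finite F \<Longrightarrow> \<forall>q\<in>F. range q \<subseteq> Q \<and> le t (lim q) \<Longrightarrow> A \<in> D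
    \<Longrightarrow> t \<in> P \<Longrightarrow> \<exists>m\<in>A. \<exists>r\<in>P. le r t \<and> (\<forall>q\<in>F. le r (q m))"
  unfolding ultrafilter_limit_def by blast

text \<open>The name of {m \<in> A. q m \<in> G for all q \<in> F}, G the generic filter.\<close>

definition in_generic_on :: "nat set \<Rightarrow> (nat \<Rightarrow> 'a) set \<Rightarrow> nat \<Rightarrow> 'a set" where
  "in_generic_on A F = (\<lambda>m. {r. m \<in> A \<and> (\<forall>q\<in>F. r \<in> ro_of P le (q m))})"

definition lim_base :: "nat set set \<Rightarrow> 'a set \<Rightarrow> ((nat \<Rightarrow> 'a) \<Rightarrow> 'a) \<Rightarrow> 'a forcing_relation" where
  "lim_base D Q lim = {(t, Y). \<exists>A\<in>D. \<exists>F. finite F \<and> (\<forall>q\<in>F. range q \<subseteq> Q \<and> le t (lim q)) \<and>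
     subset_below t (in_generic_on A F) Y}"

lemma lim_baseI:
  "A \<in> D \<Longrightarrow> finite F \<Longrightarrow> \<forall>q\<in>F. range q \<subseteq> Q \<and> le t (lim q)
    \<Longrightarrow> subset_below t (in_generic_on A F) Y \<Longrightarrow> (t, Y) \<in> lim_base D Q lim"
  unfolding lim_base_def by blast

lemma lim_baseE:
  assumes "(t, Y) \<in> lim_base D Q lim"
  obtains A F where "A \<in> D" "finite F" "\<forall>q\<in>F. range q \<subseteq> Q \<and> le t (lim q)"
    "subset_below t (in_generic_on A F) Y"
proof -
  from assms obtain A F where "A \<in> D" "finite F" "\<forall>q\<in>F. range q \<subseteq> Q \<and> le t (lim q)"
    "subset_below t (in_generic_on A F) Y"
    unfolding lim_base_def by blast
  then show thesis using that by blast
qed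

lemma lim_base_Int:
  assumes D: "nonprincipal_ultrafilter D"
    and tY: "(t, Y) \<in> lim_base D Q lim" and tY': "(t, Y') \<in> lim_base D Q lim"
  shows "(t, \<lambda>m. Y m \<inter> Y' m) \<in> lim_base D Q lim"
proof -
  obtain A F where A: "A \<in> D" "finite F" and F: "\<forall>q\<in>F. range q \<subseteq> Q \<and> le t (lim q)"
    and below: "subset_below t (in_generic_on A F) Y"
    using tY by (rule lim_baseE)
  obtain A' F' where A': "A' \<in> D" "finite F'" and F': "\<forall>q\<in>F'. range q \<subseteq> Q \<and> le t (lim q)"
    and below': "subset_below t (in_generic_on A' F') Y'"
    using tY' by (rule lim_baseE)
  have "subset_below t (in_generic_on (A \<inter> A') (F \<union> F')) (\<lambda>m. Y m \<inter> Y' m)"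
    using below below' unfolding subset_below_def in_generic_on_def by blast
  moreover have "A \<inter> A' \<in> D" using nonprincipal_ultrafilter_Int[OF D A(1) A'(1)] .
  ultimately show ?thesis
    using A(2) A'(2) F F' by (intro lim_baseI) auto
qed

lemma empty_notin_lim_base:
  assumes Q: "Q \<subseteq> P" and lim: "ultrafilter_limit D Q lim" and t: "t \<in> P"
  shows "(t, \<lambda>m. {}) \<notin> lim_base D Q lim"
proof
  assume "(t, \<lambda>m. {}) \<in> lim_base D Q lim"
  then obtain A F where A: "A \<in> D" "finite F" and F: "\<forall>q\<in>F. range q \<subseteq> Q \<and> le t (lim q)"
    and below: "subset_below t (in_generic_on A F) (\<lambda>m. {})"
    by (rule lim_baseE)
  obtain m r where m: "m \<in> A" and r: "r \<in> P" "le r t" and r_le: "\<And>q. q \<in> F \<Longrightarrow> le r (q m)"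
    using ultrafilter_limitD[OF lim A(2) F A(1) t] by blast
  have "r \<in> ro_of P le (q m)" if "q \<in> F" for q
  proof -
    have "q m \<in> P" using F that Q by blast
    then show ?thesis using mem_ro_of_if_le[OF r(1) _ r_le[OF that]] by blast
  qed
  then have "r \<in> in_generic_on A F m" unfolding in_generic_on_def using m by blast
  then show False using below r unfolding subset_below_def by blast
qed

lemma bv_filter_lim_base:
  assumes D: "nonprincipal_ultrafilter D" and Q: "Q \<subseteq> P" and lim: "ultrafilter_limit D Q lim"
  shows "bv_filter (dense_closure (lim_base D Q lim))"
proof (rule bv_filter_dense_closure)
  fix t assume "t \<in> P"
  have "subset_below t (in_generic_on UNIV {}) (\<lambda>m. P)"
    unfolding subset_below_def by blast
  then show "(t, \<lambda>m. P) \<in> lim_base D Q lim"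
    using nonprincipal_ultrafilter_UNIV[OF D] by (intro lim_baseI[where F = "{}"]) auto
next
  fix t r Y assume tY: "(t, Y) \<in> lim_base D Q lim" and t: "t \<in> P" and r: "r \<in> P" "le r t"
  obtain A F where A: "A \<in> D" "finite F" and F: "\<forall>q\<in>F. range q \<subseteq> Q \<and> le t (lim q)"
    and below: "subset_below t (in_generic_on A F) Y"
    using tY by (rule lim_baseE)
  have "le r (lim q)" if "q \<in> F" for q
  proof -
    have "range q \<subseteq> Q" and "le t (lim q)" using F that by auto
    moreover from this have "lim q \<in> P" using ultrafilter_limit_in[OF lim] Q by blast
    ultimately show ?thesis using le_trans[OF r(1) t _ r(2)] by blast
  qed
  then show "(r, Y) \<in> lim_base D Q lim"
    using A F subset_below_le[OF below t r] by (intro lim_baseI) auto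
next
  fix t Y Y' assume tY: "(t, Y) \<in> lim_base D Q lim" and YY': "subset_below t Y Y'"
  obtain A F where "A \<in> D" "finite F" "\<forall>q\<in>F. range q \<subseteq> Q \<and> le t (lim q)"
    and below: "subset_below t (in_generic_on A F) Y"
    using tY by (rule lim_baseE)
  then show "(t, Y') \<in> lim_base D Q lim"
    using subset_below_trans[OF below YY'] by (intro lim_baseI)
next
  show "(t, \<lambda>m. Y m \<inter> Y' m) \<in> lim_base D Q lim"
    if "(t, Y) \<in> lim_base D Q lim" "(t, Y') \<in> lim_base D Q lim" for t Y Y'
    using lim_base_Int[OF D that] .
  show "(t, \<lambda>m. {}) \<notin> lim_base D Q lim" if "t \<in> P" for t
    using empty_notin_lim_base[OF Q lim that] .
qed

lemma uf_name_ultrafilter_limit: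
  assumes D: "nonprincipal_ultrafilter D" and Q: "Q \<subseteq> P" and lim: "ultrafilter_limit D Q lim"
  shows "\<exists>U. uf_name P le D U \<and> (\<forall>q. range q \<subseteq> Q \<longrightarrow> lim q \<in> U (\<lambda>m. ro_of P le (q m)))"
proof -
  obtain R where R: "bv_filter R" "dense_closure (lim_base D Q lim) \<subseteq> R" "bv_ultra R"
    using bv_ultra_extension[OF bv_filter_lim_base[OF D Q lim]] by blast
  have "(p, check_set P A) \<in> R" if A: "A \<in> D" and p: "p \<in> P" for A p
  proof -
    have "subset_below r (in_generic_on A {}) (check_set P A)" for r
      unfolding subset_below_def check_set_def in_generic_on_def by auto
    then have "(r, check_set P A) \<in> lim_base D Q lim" for r
      using A by (intro lim_baseI[where F = "{}"]) auto
    then show ?thesis using R(2) dense_closure_downI[OF p subset_name_check_set] by blast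
  qed
  then have "uf_name P le D (\<lambda>X. {p. (p, X) \<in> R})" by (rule uf_name_bv_ultra[OF R(1,3)])
  moreover have "(lim q, \<lambda>m. ro_of P le (q m)) \<in> R" if q: "range q \<subseteq> Q" for q
  proof -
    have "lim q \<in> P" using ultrafilter_limit_in[OF lim q] Q by blast
    have "subset_below r (in_generic_on UNIV {q}) (\<lambda>m. ro_of P le (q m))" for r
      unfolding subset_below_def in_generic_on_def by blast
    then have "(r, \<lambda>m. ro_of P le (q m)) \<in> lim_base D Q lim" if "le r (lim q)" for r
      using nonprincipal_ultrafilter_UNIV[OF D] q that by (intro lim_baseI[where F = "{q}"]) auto
    then show ?thesis
      using R(2) dense_closure_downI[OF \<open>lim q \<in> P\<close> subset_name_ro_of] by blast
  qed
  ultimately show ?thesis by blast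
qed

lemma closed_uf_lim_linkedI:
  assumes Q: "Q \<subseteq> P" and lim_exists: "\<And>D. nonprincipal_ultrafilter D \<Longrightarrow> \<exists>lim. ultrafilter_limit D Q lim"
  shows "closed_uf_lim_linked P le Q"
  unfolding closed_uf_lim_linked_def
proof (intro conjI allI impI)
  fix D assume D: "nonprincipal_ultrafilter D"
  then obtain lim where lim: "ultrafilter_limit D Q lim" using lim_exists by blast
  then obtain U where U: "uf_name P le D U"
    and lim_U: "\<forall>q. range q \<subseteq> Q \<longrightarrow> lim q \<in> U (\<lambda>m. ro_of P le (q m))"
    using uf_name_ultrafilter_limit[OF D Q] by blast
  have lim_Q: "\<forall>q. range q \<subseteq> Q \<longrightarrow> lim q \<in> Q" using ultrafilter_limit_in[OF lim] by blast
  show "\<exists>lim U. uf_name P le D U \<and>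
      (\<forall>q. (\<forall>m. q m \<in> Q) \<longrightarrow> lim q \<in> Q \<and> lim q \<in> U (\<lambda>m. ro_of P le (q m)))"
    using U lim_Q lim_U by (intro exI[of _ lim] exI[of _ U]) (simp add: image_subset_iff)
qed (rule Q)

end

section \<open>The eventually different forcing\<close>

lemma E_le_iff:
  "E_le (s', k', \<phi>') (s, k, \<phi>) \<longleftrightarrow> prefix s s' \<and> k \<le> k' \<and> (\<forall>i. \<phi> i \<subseteq> \<phi>' i) \<and>
     (\<forall>i. length s \<le> i \<and> i < length s' \<longrightarrow> s' ! i \<notin> \<phi> i)"
  unfolding E_le_def by simp

lemma E_le_refl: "E_le c c"
  by (cases c) (auto simp: E_le_iff)

lemma E_le_trans:
  assumes "E_le (s\<^sub>1, k\<^sub>1, \<phi>\<^sub>1) (s\<^sub>2, k\<^sub>2, \<phi>\<^sub>2)" and "E_le (s\<^sub>2, k\<^sub>2, \<phi>\<^sub>2) (s\<^sub>3, k\<^sub>3, \<phi>\<^sub>3)"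
  shows "E_le (s\<^sub>1, k\<^sub>1, \<phi>\<^sub>1) (s\<^sub>3, k\<^sub>3, \<phi>\<^sub>3)"
proof -
  have 12: "prefix s\<^sub>2 s\<^sub>1" "k\<^sub>2 \<le> k\<^sub>1" "\<forall>i. \<phi>\<^sub>2 i \<subseteq> \<phi>\<^sub>1 i"
    "\<forall>i. length s\<^sub>2 \<le> i \<and> i < length s\<^sub>1 \<longrightarrow> s\<^sub>1 ! i \<notin> \<phi>\<^sub>2 i"
    using assms(1) by (simp_all add: E_le_iff)
  have 23: "prefix s\<^sub>3 s\<^sub>2" "k\<^sub>3 \<le> k\<^sub>2" "\<forall>i. \<phi>\<^sub>3 i \<subseteq> \<phi>\<^sub>2 i"
    "\<forall>i. length s\<^sub>3 \<le> i \<and> i < length s\<^sub>2 \<longrightarrow> s\<^sub>2 ! i \<notin> \<phi>\<^sub>3 i"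
    using assms(2) by (simp_all add: E_le_iff)
  have "s\<^sub>1 ! i \<notin> \<phi>\<^sub>3 i" if "length s\<^sub>3 \<le> i" "i < length s\<^sub>1" for i
  proof (cases "i < length s\<^sub>2")
    case True
    then have "s\<^sub>1 ! i = s\<^sub>2 ! i" using 12(1) by (auto simp: prefix_def nth_append)
    then show ?thesis using 23(4) that True by auto
  next
    case False
    then have "s\<^sub>1 ! i \<notin> \<phi>\<^sub>2 i" using 12(4) that(2) by simp
    then show ?thesis using 23(3) by blast
  qed
  moreover have "prefix s\<^sub>3 s\<^sub>1" using 12(1) 23(1) by (rule prefix_order.trans[rotated])
  moreover have "k\<^sub>3 \<le> k\<^sub>1" and "\<forall>i. \<phi>\<^sub>3 i \<subseteq> \<phi>\<^sub>1 i" using 12(2,3) 23(2,3) by auto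
  ultimately show ?thesis by (simp add: E_le_iff)
qed

interpretation E: forcing_notion E_carrier E_le
proof
  show "E_le p p" for p by (rule E_le_refl)
  show "E_le a c" if "E_le a b" "E_le b c" for a b c
    using that E_le_trans by (metis prod_cases3)
qed

definition E_part :: "nat list \<Rightarrow> nat \<Rightarrow> Econd set" where
  "E_part s k = {(s, k, \<phi>) | \<phi>. \<forall>i. finite (\<phi> i) \<and> card (\<phi> i) \<le> k}"

lemma mem_E_part_iff:
  "(s', k', \<phi>) \<in> E_part s k \<longleftrightarrow> s' = s \<and> k' = k \<and> (\<forall>i. finite (\<phi> i) \<and> card (\<phi> i) \<le> k)"
  unfolding E_part_def by blast

lemma E_partE:
  assumes "c \<in> E_part s k"
  obtains \<phi> where "c = (s, k, \<phi>)" "\<forall>i. finite (\<phi> i) \<and> card (\<phi> i) \<le> k"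
  using assms unfolding E_part_def by blast

lemma E_part_subset: "E_part s k \<subseteq> E_carrier"
  unfolding E_part_def E_carrier_def by blast

lemma mem_E_carrier_iff_E_part: "(s, k, \<phi>) \<in> E_carrier \<longleftrightarrow> (s, k, \<phi>) \<in> E_part s k"
  unfolding E_carrier_def mem_E_part_iff by simp

lemma card_UN_le_mult:
  assumes "finite I" and "\<And>i. i \<in> I \<Longrightarrow> finite (A i) \<and> card (A i) \<le> k"
  shows "finite (\<Union>i\<in>I. A i) \<and> card (\<Union>i\<in>I. A i) \<le> card I * k"
proof
  show "finite (\<Union>i\<in>I. A i)" using assms by blast
  have "card (\<Union>i\<in>I. A i) \<le> (\<Sum>i\<in>I. card (A i))" using card_UN_le[OF assms(1)] .
  also have "\<dots> \<le> card I * k" using sum_bounded_above[of I "\<lambda>i. card (A i)" k] assms(2) by simp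
  finally show "card (\<Union>i\<in>I. A i) \<le> card I * k" .
qed

lemma E_common_extension:
  assumes t: "(st, kt, ft) \<in> E_carrier" and F: "finite F" "F \<subseteq> E_part s k" and "prefix s st"
    and avoid: "\<And>\<phi> i. (s, k, \<phi>) \<in> F \<Longrightarrow> length s \<le> i \<Longrightarrow> i < length st \<Longrightarrow> st ! i \<notin> \<phi> i"
  shows "\<exists>r\<in>E_carrier. E_le r (st, kt, ft) \<and> (\<forall>c\<in>F. E_le r c)"
proof -
  define f where "f i = ft i \<union> (\<Union>c\<in>F. snd (snd c) i)" for i
  define r where "r = (st, kt + card F * k, f)"
  have F_width: "finite (snd (snd c) i) \<and> card (snd (snd c) i) \<le> k" if c: "c \<in> F" for c i
  proof -
    have "c \<in> E_part s k" using F(2) c by blast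
    then obtain \<phi> where "c = (s, k, \<phi>)" "\<forall>i. finite (\<phi> i) \<and> card (\<phi> i) \<le> k"
      by (rule E_partE)
    then show ?thesis by simp
  qed
  have "finite (f i) \<and> card (f i) \<le> kt + card F * k" for i
  proof -
    have U: "finite (\<Union>c\<in>F. snd (snd c) i) \<and> card (\<Union>c\<in>F. snd (snd c) i) \<le> card F * k"
      using card_UN_le_mult[OF F(1), of "\<lambda>c. snd (snd c) i" k] F_width by blast
    have ft: "finite (ft i)" "card (ft i) \<le> kt" using t unfolding E_carrier_def by auto
    have "card (f i) \<le> card (ft i) + card (\<Union>c\<in>F. snd (snd c) i)"
      unfolding f_def by (rule card_Un_le)
    moreover have "finite (f i)" unfolding f_def using U ft(1) by blast
    ultimately show ?thesis using U ft(2) by linarith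
  qed
  then have "r \<in> E_carrier" unfolding r_def E_carrier_def by simp
  moreover have "E_le r (st, kt, ft)" unfolding r_def E_le_iff f_def by auto
  moreover have "E_le r c" if "c \<in> F" for c
  proof -
    have "c \<in> E_part s k" using F(2) \<open>c \<in> F\<close> by blast
    then obtain \<phi> where c: "c = (s, k, \<phi>)" unfolding E_part_def by blast
    have "0 < card F" using F(1) \<open>c \<in> F\<close> card_gt_0_iff by blast
    then have "k \<le> kt + card F * k" by (cases "card F") auto
    moreover have "\<phi> i \<subseteq> f i" for i
      using UN_upper[OF \<open>c \<in> F\<close>, of "\<lambda>c. snd (snd c) i"] c unfolding f_def by auto
    moreover have "(s, k, \<phi>) \<in> F" using \<open>c \<in> F\<close> c by simp
    ultimately show ?thesis
      unfolding r_def c E_le_iff using \<open>prefix s st\<close> avoid by blast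
  qed
  ultimately show ?thesis by blast
qed

lemma E_part_centered: "centered E_carrier E_le (E_part s k)"
  unfolding centered_def
proof (intro conjI allI impI)
  show "E_part s k \<subseteq> E_carrier" by (rule E_part_subset)
  fix F assume "finite F \<and> F \<subseteq> E_part s k"
  moreover have "(s, 0, \<lambda>i. {}) \<in> E_carrier" unfolding E_carrier_def by simp
  ultimately show "\<exists>r\<in>E_carrier. \<forall>q\<in>F. E_le r q"
    using E_common_extension[of s 0 "\<lambda>i. {}" F s k] by auto
qed

definition E_lim :: "nat set set \<Rightarrow> nat list \<Rightarrow> nat \<Rightarrow> (nat \<Rightarrow> Econd) \<Rightarrow> Econd" where
  "E_lim D s k q = (s, k, \<lambda>i. {x. {m. x \<in> snd (snd (q m)) i} \<in> D})"

lemma E_lim_in_E_part: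
  assumes D: "nonprincipal_ultrafilter D" and q: "range q \<subseteq> E_part s k"
  shows "E_lim D s k q \<in> E_part s k"
proof -
  have "finite {x. {m. x \<in> snd (snd (q m)) i} \<in> D} \<and> card {x. {m. x \<in> snd (snd (q m)) i} \<in> D} \<le> k"
    for i
  proof (rule finite_if_finite_subsets_card_bdd)
    fix S assume S: "S \<subseteq> {x. {m. x \<in> snd (snd (q m)) i} \<in> D}" "finite S"
    then have "(\<Inter>x\<in>S. {m. x \<in> snd (snd (q m)) i}) \<in> D"
      by (intro nonprincipal_ultrafilter_INT[OF D]) auto
    then obtain m where "S \<subseteq> snd (snd (q m)) i"
      using nonprincipal_ultrafilter_nonempty[OF D] by blast
    moreover have "q m \<in> E_part s k" using q by blast
    then obtain \<phi> where "q m = (s, k, \<phi>)" "\<forall>i. finite (\<phi> i) \<and> card (\<phi> i) \<le> k"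
      by (rule E_partE)
    ultimately have "S \<subseteq> \<phi> i" "finite (\<phi> i)" "card (\<phi> i) \<le> k" by auto
    then show "card S \<le> k" using card_mono[of "\<phi> i" S] by linarith
  qed
  then show ?thesis unfolding E_lim_def mem_E_part_iff by blast
qed

lemma E_lim_eventually_avoided:
  assumes D: "nonprincipal_ultrafilter D" and F: "finite F"
    and below: "\<forall>q\<in>F. E_le (st, kt, ft) (E_lim D s k q)" and A: "A \<in> D"
  shows "\<exists>m\<in>A. \<forall>q\<in>F. \<forall>i. length s \<le> i \<and> i < length st \<longrightarrow> st ! i \<notin> snd (snd (q m)) i"
proof -
  have "{m. st ! i \<notin> snd (snd (q m)) i} \<in> D"
    if q: "q \<in> F" and i: "length s \<le> i" "i < length st" for q i
  proof -
    have "{m. st ! i \<in> snd (snd (q m)) i} \<notin> D"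
      using below q i by (simp add: E_lim_def E_le_iff)
    then show ?thesis using nonprincipal_ultrafilter_Compl[OF D] by (simp add: Collect_neg_eq)
  qed
  then have "(\<Inter>x\<in>F \<times> {length s..<length st}. {m. st ! snd x \<notin> snd (snd (fst x m)) (snd x)}) \<in> D"
    using F by (intro nonprincipal_ultrafilter_INT[OF D]) auto
  then have "A \<inter> (\<Inter>x\<in>F \<times> {length s..<length st}. {m. st ! snd x \<notin> snd (snd (fst x m)) (snd x)}) \<noteq> {}"
    using nonprincipal_ultrafilter_Int[OF D A] nonprincipal_ultrafilter_nonempty[OF D] by blast
  then obtain m where m: "m \<in> A"
    and avoid: "\<forall>x\<in>F \<times> {length s..<length st}. st ! snd x \<notin> snd (snd (fst x m)) (snd x)"
    by blast
  have "st ! i \<notin> snd (snd (q m)) i" if "q \<in> F" "length s \<le> i" "i < length st" for q i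
    using avoid[rule_format, of "(q, i)"] that by simp
  then show ?thesis using m by blast
qed

lemma E_lim_ultrafilter_limit:
  assumes D: "nonprincipal_ultrafilter D"
  shows "E.ultrafilter_limit D (E_part s k) (E_lim D s k)"
  unfolding E.ultrafilter_limit_def
proof (intro conjI allI impI)
  show "E_lim D s k q \<in> E_part s k" if "range q \<subseteq> E_part s k" for q
    using E_lim_in_E_part[OF D that] .
  fix F A t
  assume F: "finite F" "\<forall>q\<in>F. range q \<subseteq> E_part s k \<and> E_le t (E_lim D s k q)"
    and A: "A \<in> D" and t: "t \<in> E_carrier"
  obtain st kt ft where t_eq: "t = (st, kt, ft)" by (cases t)
  show "\<exists>m\<in>A. \<exists>r\<in>E_carrier. E_le r t \<and> (\<forall>q\<in>F. E_le r (q m))"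
  proof (cases "F = {}")
    case True
    obtain m where "m \<in> A" using nonprincipal_ultrafilter_nonempty[OF D A] by blast
    then show ?thesis using True t E_le_refl by blast
  next
    case False
    then obtain q\<^sub>0 where "q\<^sub>0 \<in> F" by blast
    then have "E_le (st, kt, ft) (E_lim D s k q\<^sub>0)" using F(2) t_eq by blast
    then have stem: "prefix s st" by (simp add: E_lim_def E_le_iff)
    obtain m where m: "m \<in> A"
      and avoid: "\<forall>q\<in>F. \<forall>i. length s \<le> i \<and> i < length st \<longrightarrow> st ! i \<notin> snd (snd (q m)) i"
      using E_lim_eventually_avoided[OF D F(1) _ A, of st kt ft s k] F(2) t_eq by blast
    have "(\<lambda>q. q m) ` F \<subseteq> E_part s k" using F(2) by blast
    moreover have "st ! i \<notin> \<phi> i"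
      if \<phi>: "(s, k, \<phi>) \<in> (\<lambda>q. q m) ` F" and i: "length s \<le> i" "i < length st" for \<phi> i
    proof -
      obtain q where "q \<in> F" "q m = (s, k, \<phi>)" using \<phi> by (metis imageE)
      then show ?thesis using avoid i by force
    qed
    ultimately obtain r where "r \<in> E_carrier" "E_le r t" "\<forall>c\<in>(\<lambda>q. q m) ` F. E_le r c"
      using E_common_extension[of st kt ft "(\<lambda>q. q m) ` F" s k] t F(1) stem
      unfolding t_eq by blast
    then show ?thesis using m by blast
  qed
qed

lemma E_part_closed_uf_lim_linked: "closed_uf_lim_linked E_carrier E_le (E_part s k)"
  using E_part_subset E_lim_ultrafilter_limit by (blast intro: E.closed_uf_lim_linkedI)

theorem corollary3p29:
  shows "\<exists>Q :: nat \<Rightarrow> Econd set. (\<Union>n. Q n) = E_carrier \<and>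
           (\<forall>n. centered E_carrier E_le (Q n) \<and> closed_uf_lim_linked E_carrier E_le (Q n))"
proof (intro exI conjI allI)
  define Q where "Q n = (case from_nat n :: nat list \<times> nat of (s, k) \<Rightarrow> E_part s k)" for n
  show "(\<Union>n. Q n) = E_carrier"
  proof
    show "(\<Union>n. Q n) \<subseteq> E_carrier" using E_part_subset unfolding Q_def by (auto split: prod.splits)
    show "E_carrier \<subseteq> (\<Union>n. Q n)"
    proof
      fix c assume "c \<in> E_carrier"
      moreover obtain s k \<phi> where c: "c = (s, k, \<phi>)" by (cases c)
      ultimately have "c \<in> E_part s k" using mem_E_carrier_iff_E_part by simp
      then have "c \<in> Q (to_nat (s, k))" unfolding Q_def by simp
      then show "c \<in> (\<Union>n. Q n)" by blast
    qed
  qed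
  show "centered E_carrier E_le (Q n)" "closed_uf_lim_linked E_carrier E_le (Q n)" for n
    unfolding Q_def using E_part_centered E_part_closed_uf_lim_linked by (simp_all split: prod.split)
qed

end
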